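(* Let $X$ and $Y$ be balleans and $f:X\to Y$ an asymptotic immersion. If $Y$ is normal, then $X$ is normal.
   Context: A ballean is a pair $(X,\mathcal E_X)$ where $X$ is a set and $\mathcal E_X$ is a family of subsets of $X\times X$ (entourages) such that: each $E\in\mathcal E_X$ contains the diagonal; for any $E,F\in\mathcal E_X$ there is $D\in\mathcal E_X$ with $E\circ F^{-1}\subset D$; and $\bigcup\mathcal E_X=X\times X$. For $E\in\mathcal E_X$, $x\in X$, $A\subset X$: $E[x]=\{y:(x,y)\in E\}$, $E[A]=\bigcup_{a\in A}E[a]$. $B\subset X$ is bounded if $B\subset E[x]$ for some $E\in\mathcal E_X$, $x\in X$; $\mathcal B_X$ is the family of bounded sets. Sets $A,B$ are asymptotically disjoint if $E[A]\cap E[B]\in\mathcal B_X$ for all $E\in\mathcal E_X$; $U$ is an asymptotic neighborhood of $A$ if $E[A]\setminus U\in\mathcal B_X$ for all $E$; $X$ is normal if any two asymptotically disjoint sets have disjoint asymptotic neighborhoods. A map $f:X\to Y$ is macro-uniform if for every $E_X\in\mathcal E_X$ there is $E_Y\in\mathcal E_Y$ with $f(E_X[x])\subset E_Y[f(x)]$ for all $x\in X$; proper if $f^{-1}(B)$ is bounded in $X$ for every bounded $B\subset Y$; and an asymptotic immersion if it is proper, macro-uniform, and $f(A),f(B)$ are asymptotically disjoint in $Y$ whenever $A,B$ are asymptotically disjoint in $X$. *)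

theory Defs
  imports Main
begin

definition ballean :: "'a set \<Rightarrow> ('a \<times> 'a) set set \<Rightarrow> bool" where
  "ballean X EntX \<longleftrightarrow>
     (\<forall>E\<in>EntX. E \<subseteq> X \<times> X) \<and>
     (\<forall>E\<in>EntX. Id_on X \<subseteq> E) \<and>
     (\<forall>E\<in>EntX. \<forall>F\<in>EntX. \<exists>D\<in>EntX. E O converse F \<subseteq> D) \<and>
     \<Union>EntX = X \<times> X"

definition ball_at :: "('a \<times> 'a) set \<Rightarrow> 'a \<Rightarrow> 'a set" where
  "ball_at E x = {y. (x, y) \<in> E}"

definition ball_set :: "('a \<times> 'a) set \<Rightarrow> 'a set \<Rightarrow> 'a set" where
  "ball_set E A = (\<Union>a\<in>A. ball_at E a)"

definition bounded_in :: "'a set \<Rightarrow> ('a \<times> 'a) set set \<Rightarrow> 'a set \<Rightarrow> bool" where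
  "bounded_in X EntX B \<longleftrightarrow> (\<exists>E\<in>EntX. \<exists>x\<in>X. B \<subseteq> ball_at E x)"

definition asym_disjoint :: "'a set \<Rightarrow> ('a \<times> 'a) set set \<Rightarrow> 'a set \<Rightarrow> 'a set \<Rightarrow> bool" where
  "asym_disjoint X EntX A B \<longleftrightarrow>
     (\<forall>E\<in>EntX. bounded_in X EntX (ball_set E A \<inter> ball_set E B))"

definition asym_nbhd :: "'a set \<Rightarrow> ('a \<times> 'a) set set \<Rightarrow> 'a set \<Rightarrow> 'a set \<Rightarrow> bool" where
  "asym_nbhd X EntX U A \<longleftrightarrow> (\<forall>E\<in>EntX. bounded_in X EntX (ball_set E A - U))"

definition normal_ballean :: "'a set \<Rightarrow> ('a \<times> 'a) set set \<Rightarrow> bool" where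
  "normal_ballean X EntX \<longleftrightarrow>
     (\<forall>A B. A \<subseteq> X \<longrightarrow> B \<subseteq> X \<longrightarrow> asym_disjoint X EntX A B \<longrightarrow>
        (\<exists>U V. U \<subseteq> X \<and> V \<subseteq> X \<and> asym_nbhd X EntX U A \<and> asym_nbhd X EntX V B
               \<and> U \<inter> V = {}))"

definition macro_uniform ::
  "'a set \<Rightarrow> ('a \<times> 'a) set set \<Rightarrow> 'b set \<Rightarrow> ('b \<times> 'b) set set \<Rightarrow> ('a \<Rightarrow> 'b) \<Rightarrow> bool" where
  "macro_uniform X EntX Y EntY f \<longleftrightarrow>
     (\<forall>E\<in>EntX. \<exists>F\<in>EntY. \<forall>x\<in>X. f ` ball_at E x \<subseteq> ball_at F (f x))"

definition proper_map ::
  "'a set \<Rightarrow> ('a \<times> 'a) set set \<Rightarrow> 'b set \<Rightarrow> ('b \<times> 'b) set set \<Rightarrow> ('a \<Rightarrow> 'b) \<Rightarrow> bool" where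
  "proper_map X EntX Y EntY f \<longleftrightarrow>
     (\<forall>B. B \<subseteq> Y \<longrightarrow> bounded_in Y EntY B \<longrightarrow> bounded_in X EntX (f -` B \<inter> X))"

definition asym_immersion ::
  "'a set \<Rightarrow> ('a \<times> 'a) set set \<Rightarrow> 'b set \<Rightarrow> ('b \<times> 'b) set set \<Rightarrow> ('a \<Rightarrow> 'b) \<Rightarrow> bool" where
  "asym_immersion X EntX Y EntY f \<longleftrightarrow>
     f ` X \<subseteq> Y \<and> proper_map X EntX Y EntY f \<and> macro_uniform X EntX Y EntY f \<and>
     (\<forall>A B. A \<subseteq> X \<longrightarrow> B \<subseteq> X \<longrightarrow> asym_disjoint X EntX A B \<longrightarrow>
        asym_disjoint Y EntY (f ` A) (f ` B))"

end

theory Submission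
  imports Defs
begin

text \<open>Pull back along f: the disjoint asymptotic neighbourhoods in Y of f A and f B have
  disjoint preimages, and macro-uniformity together with properness makes each preimage an
  asymptotic neighbourhood in X, since the part of E[A] outside the preimage of U is carried
  by f into the bounded set F[f A] - U.\<close>

lemma bounded_in_subset: "bounded_in X Ent B \<Longrightarrow> C \<subseteq> B \<Longrightarrow> bounded_in X Ent C"
  unfolding bounded_in_def by blast

lemma ball_set_subset_carrier: "E \<subseteq> X \<times> X \<Longrightarrow> ball_set E A \<subseteq> X"
  unfolding ball_set_def ball_at_def by blast

lemma ballean_entourage_subset: "ballean X Ent \<Longrightarrow> E \<in> Ent \<Longrightarrow> E \<subseteq> X \<times> X"
  unfolding ballean_def by blast

lemma image_ball_set_subset:
  assumes "\<forall>x\<in>X. f ` ball_at E x \<subseteq> ball_at F (f x)" and "A \<subseteq> X"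
  shows "f ` ball_set E A \<subseteq> ball_set F (f ` A)"
  using assms unfolding ball_set_def by blast

lemma asym_nbhd_vimage:
  assumes X: "ballean X EntX" and Y: "ballean Y EntY"
    and proper: "proper_map X EntX Y EntY f" and mu: "macro_uniform X EntX Y EntY f"
    and A: "A \<subseteq> X" and U: "asym_nbhd Y EntY U (f ` A)"
  shows "asym_nbhd X EntX (f -` U \<inter> X) A"
  unfolding asym_nbhd_def
proof
  fix E assume E: "E \<in> EntX"
  then obtain F where F: "F \<in> EntY" and EF: "\<forall>x\<in>X. f ` ball_at E x \<subseteq> ball_at F (f x)"
    using mu unfolding macro_uniform_def by blast
  have bounded_Y: "bounded_in Y EntY (ball_set F (f ` A) - U)"
    using U F unfolding asym_nbhd_def by blast
  have "ball_set F (f ` A) - U \<subseteq> Y"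
    using ball_set_subset_carrier[OF ballean_entourage_subset[OF Y F]] by blast
  with proper bounded_Y have bounded_X: "bounded_in X EntX (f -` (ball_set F (f ` A) - U) \<inter> X)"
    unfolding proper_map_def by blast
  have "ball_set E A \<subseteq> X"
    using ball_set_subset_carrier[OF ballean_entourage_subset[OF X E]] .
  with image_ball_set_subset[OF EF A]
  have "ball_set E A - (f -` U \<inter> X) \<subseteq> f -` (ball_set F (f ` A) - U) \<inter> X"
    by blast
  then show "bounded_in X EntX (ball_set E A - (f -` U \<inter> X))"
    using bounded_in_subset[OF bounded_X] by blast
qed

theorem proposition2p1:
  assumes "ballean X EntX" and "ballean Y EntY"
    and "asym_immersion X EntX Y EntY f"
    and "normal_ballean Y EntY"
  shows "normal_ballean X EntX"
  unfolding normal_ballean_def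
proof (intro allI impI)
  fix A B assume A: "A \<subseteq> X" and B: "B \<subseteq> X" and AB: "asym_disjoint X EntX A B"
  have fX: "f ` X \<subseteq> Y" and proper: "proper_map X EntX Y EntY f"
    and mu: "macro_uniform X EntX Y EntY f"
    and "asym_disjoint Y EntY (f ` A) (f ` B)"
    using assms(3) A B AB unfolding asym_immersion_def by simp_all
  moreover have "f ` A \<subseteq> Y" "f ` B \<subseteq> Y"
    using fX A B by auto
  ultimately obtain U V where U: "asym_nbhd Y EntY U (f ` A)" and V: "asym_nbhd Y EntY V (f ` B)"
      and "U \<inter> V = {}"
    using assms(4) unfolding normal_ballean_def by meson
  then have "(f -` U \<inter> X) \<inter> (f -` V \<inter> X) = {}"
    by blast
  moreover have "asym_nbhd X EntX (f -` U \<inter> X) A" "asym_nbhd X EntX (f -` V \<inter> X) B"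
    using asym_nbhd_vimage[OF assms(1,2) proper mu] A B U V by simp_all
  ultimately show "\<exists>U V. U \<subseteq> X \<and> V \<subseteq> X \<and> asym_nbhd X EntX U A \<and> asym_nbhd X EntX V B \<and> U \<inter> V = {}"
    by (intro exI[of _ "f -` U \<inter> X"] exI[of _ "f -` V \<inter> X"]) simp
qed

end
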